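(* For cake instances, Generalized PAV does not satisfy cake EJR: there exists a cake instance and an allocation selected by Generalized PAV that violates cake EJR.
   Context: Model: There is a set of agents $N=\{1,\dots,n\}$. The resource $R$ consists of a cake $C=[0,c]$ for a real $c\ge 0$ and a set of indivisible goods $G=\{g_1,\dots,g_m\}$ for an integer $m\ge 0$, with $\max(c,m)>0$. A piece of cake is a union of finitely many disjoint closed subintervals of $C$; its length $\ell(\cdot)$ is the sum of the lengths of its intervals. A bundle $R'=(C',G')$ consists of a piece of cake $C'\subseteq C$ and a set $G'\subseteq G$; its size is $s(R')=\ell(C')+|G'|$. Each agent $i$ approves a bundle $R_i=(C_i,G_i)$, and her utility for a bundle $R'$ is $u_i(R')=\ell(C_i\cap C')+|G_i\cap G'|$. A parameter $\alpha\in(0,c+m]$ is given; an allocation is a bundle $A$ with $s(A)\le\alpha$. A cake instance is one with $m=0$. For a real $t>0$, $N^*\subseteq N$ is $t$-cohesive if $|N^*|\ge t n/\alpha$ and $s(\bigcap_{i\in N^*}R_i)\ge t$. Cake EJR: an allocation $A$ satisfies cake EJR if for every real $t>0$ and every $t$-cohesive group $N^*$, some $j\in N^*$ has $u_j(A)\ge t$. Generalized harmonic numbers: $H_x\coloneqq\sum_{k=1}^\infty\frac{x}{k(x+k)}$ for real $x\ge0$. Generalized PAV selects an allocation $R'$ with $s(R')\le\alpha$ maximizing $\sum_{i\in N}H_{u_i(R')}$. *)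

theory Defs
  imports "HOL-Analysis.Analysis"
begin

definition is_piece :: "real \<Rightarrow> real set \<Rightarrow> bool" where
  "is_piece c P \<longleftrightarrow>
     (\<exists>I :: (real \<times> real) set. finite I \<and>
        (\<forall>(a,b)\<in>I. 0 \<le> a \<and> a \<le> b \<and> b \<le> c) \<and>
        disjoint_family_on (\<lambda>(a,b). {a..b}) I \<and>
        P = (\<Union>(a,b)\<in>I. {a..b}))"

text \<open>Length of a piece of cake (sum of the interval lengths = Lebesgue measure).\<close>
definition len :: "real set \<Rightarrow> real" where
  "len P = measure lborel P"

definition cake_util :: "real set \<Rightarrow> real set \<Rightarrow> real" where
  "cake_util Ri A = len (Ri \<inter> A)"

definition gen_harmonic :: "real \<Rightarrow> real" where
  "gen_harmonic x = (\<Sum>k. x / (real (Suc k) * (x + real (Suc k))))"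

definition is_cake_allocation :: "real \<Rightarrow> real \<Rightarrow> real set \<Rightarrow> bool" where
  "is_cake_allocation c \<alpha> A \<longleftrightarrow> is_piece c A \<and> len A \<le> \<alpha>"

definition gpav_outcome :: "nat \<Rightarrow> real \<Rightarrow> real \<Rightarrow> (nat \<Rightarrow> real set) \<Rightarrow> real set \<Rightarrow> bool" where
  "gpav_outcome n c \<alpha> R A \<longleftrightarrow> is_cake_allocation c \<alpha> A \<and>
     (\<forall>B. is_cake_allocation c \<alpha> B \<longrightarrow>
        (\<Sum>i\<in>{1..n}. gen_harmonic (cake_util (R i) B))
          \<le> (\<Sum>i\<in>{1..n}. gen_harmonic (cake_util (R i) A)))"

definition t_cohesive :: "nat \<Rightarrow> real \<Rightarrow> (nat \<Rightarrow> real set) \<Rightarrow> real \<Rightarrow> nat set \<Rightarrow> bool" where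
  "t_cohesive n \<alpha> R t S \<longleftrightarrow> S \<subseteq> {1..n} \<and> real (card S) \<ge> t * real n / \<alpha> \<and>
     len (\<Inter>i\<in>S. R i) \<ge> t"

definition cake_EJR :: "nat \<Rightarrow> real \<Rightarrow> (nat \<Rightarrow> real set) \<Rightarrow> real set \<Rightarrow> bool" where
  "cake_EJR n \<alpha> R A \<longleftrightarrow>
     (\<forall>t>0. \<forall>S. t_cohesive n \<alpha> R t S \<longrightarrow> (\<exists>j\<in>S. cake_util (R j) A \<ge> t))"

end

theory Submission
  imports Defs
begin

text \<open>Three agents share the cake [0,2] with budget 1/4; agents 1 and 2 approve [0,1] and
  agent 3 approves [3/2,2]. Agent 3 alone forms a 1/12-cohesive group, so cake EJR requires
  her to get 1/12. Yet in every summand y/(k(y+k)) of the generalized harmonic number,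
  moving an amount w of agent 3's share to the two agents sharing [0,1] gains at least
  2w/(a+k)^2 and loses at most w/k^2, a net gain as long as (a+1)^2 \<le> 2. So the PAV welfare
  is maximized by spending the whole budget inside [0,1], e.g. on A = [0,1/4], which leaves
  agent 3 with nothing.\<close>

lemma harmonic_term_eq:
  fixes x y :: real
  assumes "x > 0" "y \<ge> 0"
  shows "y / (x * (y + x)) = 1 / x - 1 / (y + x)"
  using assms by (simp add: field_simps)

lemma harmonic_term_shift_le:
  fixes a x u w :: real
  assumes x: "x \<ge> 1" and u: "u \<ge> 0" and w: "w \<ge> 0" and uw: "u + w \<le> a"
    and a: "(a + 1)^2 \<le> 2"
  shows "2 * (u / (x * (u + x))) + w / (x * (w + x)) \<le> 2 * (a / (x * (a + x)))"
proof -
  have pos: "x > 0" "a - w + x > 0" "a + x > 0" using x u w uw by auto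
  have "u / (x * (u + x)) \<le> (a - w) / (x * (a - w + x))"
    using harmonic_term_eq[of x u] harmonic_term_eq[of x "a - w"] pos u uw
    by (simp add: frac_le)
  moreover have "w / (x * (w + x)) \<le> w / x^2"
    using x w by (simp add: power2_eq_square frac_le mult_left_mono)
  moreover have sq: "(a + x)^2 \<le> 2 * x^2"
  proof -
    have "a * 1 \<le> a * x" using x u w uw by (intro mult_left_mono) auto
    hence "a + x \<le> (a + 1) * x" by (simp add: algebra_simps)
    hence "(a + x)^2 \<le> ((a + 1) * x)^2" using pos by (intro power_mono) auto
    also have "\<dots> \<le> 2 * x^2" using a by (simp add: power_mult_distrib mult_right_mono)
    finally show ?thesis .
  qed
  moreover have "w / x^2 \<le> 2 * (w / (a + x)^2)"
  proof -
    have "w / x^2 = 2 * w / (2 * x^2)" by simp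
    also have "\<dots> \<le> 2 * w / (a + x)^2"
      using sq w pos by (intro divide_left_mono) auto
    finally show ?thesis by simp
  qed
  moreover have "w / (a + x)^2 \<le> w / ((a - w + x) * (a + x))"
    using w pos by (intro divide_left_mono) (auto simp: power2_eq_square)
  moreover have "a / (x * (a + x)) - (a - w) / (x * (a - w + x)) = w / ((a - w + x) * (a + x))"
  proof -
    have "a / (x * (a + x)) - (a - w) / (x * (a - w + x)) = 1 / (a - w + x) - 1 / (a + x)"
      using harmonic_term_eq[of x a] harmonic_term_eq[of x "a - w"] pos u w uw by simp
    also have "\<dots> = w / ((a - w + x) * (a + x))" using pos by (simp add: field_simps)
    finally show ?thesis .
  qed
  ultimately show ?thesis by linarith
qed

lemma gen_harmonic_sums:
  fixes y :: real
  assumes "y \<ge> 0"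
  shows "(\<lambda>k. y / (real (Suc k) * (y + real (Suc k)))) sums gen_harmonic y"
proof -
  have "summable (\<lambda>k. y / (real (Suc k) * (y + real (Suc k))))"
  proof (rule summable_comparison_test')
    show "summable (\<lambda>k. y * inverse (real (Suc k) ^ 2))"
      by (intro summable_mult, subst summable_Suc_iff) (rule inverse_power_summable, simp)
    show "norm (y / (real (Suc k) * (y + real (Suc k)))) \<le> y * inverse (real (Suc k) ^ 2)"
      for k
    proof -
      have "y / (real (Suc k) * (y + real (Suc k))) \<le> y / (real (Suc k) * real (Suc k))"
        using assms by (intro divide_left_mono mult_left_mono) auto
      thus ?thesis using assms by (simp add: power2_eq_square divide_inverse)
    qed
  qed
  thus ?thesis unfolding gen_harmonic_def by (rule summable_sums)
qed

lemma gen_harmonic_0 [simp]: "gen_harmonic 0 = 0"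
  by (simp add: gen_harmonic_def)

lemma gen_harmonic_shift_le:
  fixes a u w :: real
  assumes "u \<ge> 0" "w \<ge> 0" "u + w \<le> a" "(a + 1)^2 \<le> 2"
  shows "2 * gen_harmonic u + gen_harmonic w \<le> 2 * gen_harmonic a"
proof (rule sums_le)
  show "(\<lambda>k. 2 * (u / (real (Suc k) * (u + real (Suc k)))) + w / (real (Suc k) * (w + real (Suc k))))
          sums (2 * gen_harmonic u + gen_harmonic w)"
    using assms by (intro sums_add sums_mult gen_harmonic_sums)
  show "(\<lambda>k. 2 * (a / (real (Suc k) * (a + real (Suc k))))) sums (2 * gen_harmonic a)"
    using assms by (intro sums_mult gen_harmonic_sums) auto
qed (use assms harmonic_term_shift_le in auto)

lemma measure_Int_add_le:
  assumes "B \<in> fmeasurable M" "S \<in> sets M" "T \<in> sets M" "S \<inter> T = {}"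
  shows "measure M (B \<inter> S) + measure M (B \<inter> T) \<le> measure M B"
proof -
  have BS: "B \<inter> S \<in> fmeasurable M" and BT: "B \<inter> T \<in> fmeasurable M"
    using fmeasurable_Int_fmeasurable[OF assms(1)] assms(2,3) by auto
  have "measure M (B \<inter> S) + measure M (B \<inter> T) = measure M ((B \<inter> S) \<union> (B \<inter> T))"
    using BS BT assms(4) by (intro measure_Union[symmetric]) (auto simp: fmeasurable_def)
  also have "\<dots> \<le> measure M B"
    using assms(1) BS BT by (intro measure_mono_fmeasurable) (auto simp: fmeasurable_def)
  finally show ?thesis .
qed

lemma is_piece_Icc: "0 \<le> a \<Longrightarrow> a \<le> b \<Longrightarrow> b \<le> c \<Longrightarrow> is_piece c {a..b}"
  unfolding is_piece_def by (rule exI[of _ "{(a, b)}"]) (auto simp: disjoint_family_on_def)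

lemma is_piece_compact:
  assumes "is_piece c P"
  shows "compact P"
proof -
  obtain I where "finite I" "P = (\<Union>(a, b)\<in>I. {a..b::real})"
    using assms unfolding is_piece_def by blast
  thus ?thesis by auto
qed

definition example_profile :: "nat \<Rightarrow> real set" where
  "example_profile i = (if i = 3 then {3/2..2} else {0..1})"

definition example_outcome :: "real set" where
  "example_outcome = {0..1/4}"

lemma example_profile_pieces: "\<forall>i\<in>{1..3}. is_piece 2 (example_profile i)"
  by (auto simp: example_profile_def intro: is_piece_Icc)

lemma example_welfare:
  "(\<Sum>i\<in>{1..3}. gen_harmonic (cake_util (example_profile i) B))
     = 2 * gen_harmonic (len (B \<inter> {0..1})) + gen_harmonic (len (B \<inter> {3/2..2}))"
proof -
  have "{1..3::nat} = {1, 2, 3}" by auto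
  thus ?thesis by (simp add: cake_util_def example_profile_def Int_commute)
qed

lemma example_outcome_gpav: "gpav_outcome 3 2 (1/4) example_profile example_outcome"
  unfolding gpav_outcome_def
proof (intro conjI allI impI)
  show "is_cake_allocation 2 (1/4) example_outcome"
    unfolding is_cake_allocation_def example_outcome_def len_def by (auto intro: is_piece_Icc)
next
  fix B assume "is_cake_allocation 2 (1/4) B"
  hence piece: "is_piece 2 B" and budget: "len B \<le> 1/4"
    unfolding is_cake_allocation_def by auto
  have "len (B \<inter> {0..1}) + len (B \<inter> {3/2..2}) \<le> len B"
    unfolding len_def using is_piece_compact[OF piece]
    by (intro measure_Int_add_le fmeasurable_compact) auto
  hence "2 * gen_harmonic (len (B \<inter> {0..1})) + gen_harmonic (len (B \<inter> {3/2..2}))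
           \<le> 2 * gen_harmonic (1/4)"
    using budget by (intro gen_harmonic_shift_le) (auto simp: len_def power2_eq_square)
  also have "2 * gen_harmonic (1/4) = 2 * gen_harmonic (len (example_outcome \<inter> {0..1}))
               + gen_harmonic (len (example_outcome \<inter> {3/2..2}))"
  proof -
    have "example_outcome \<inter> {0..1} = {0..1/4}" "example_outcome \<inter> {3/2..2} = {}"
      by (auto simp: example_outcome_def)
    thus ?thesis by (simp add: len_def)
  qed
  finally show "(\<Sum>i\<in>{1..3}. gen_harmonic (cake_util (example_profile i) B))
                  \<le> (\<Sum>i\<in>{1..3}. gen_harmonic (cake_util (example_profile i) example_outcome))"
    by (simp only: example_welfare)
qed

lemma example_outcome_not_cake_EJR: "\<not> cake_EJR 3 (1/4) example_profile example_outcome"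
  unfolding cake_EJR_def
proof
  have cohesive: "t_cohesive 3 (1/4) example_profile (1/12) {3}"
    unfolding t_cohesive_def len_def by (simp add: example_profile_def)
  have "example_profile 3 \<inter> example_outcome = {}"
    by (auto simp: example_profile_def example_outcome_def)
  hence no_share: "cake_util (example_profile 3) example_outcome = 0"
    by (simp add: cake_util_def len_def)
  assume "\<forall>t>0. \<forall>S. t_cohesive 3 (1/4) example_profile t S \<longrightarrow>
            (\<exists>j\<in>S. cake_util (example_profile j) example_outcome \<ge> t)"
  hence "cake_util (example_profile 3) example_outcome \<ge> 1/12"
    using cohesive by (metis singletonD zero_less_divide_1_iff zero_less_numeral)
  thus False using no_share by simp
qed

theorem mainTheorem12:
  shows "\<exists>(n::nat) (c::real) (\<alpha>::real) (R::nat \<Rightarrow> real set) (A::real set).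
           n \<ge> 1 \<and> c > 0 \<and> 0 < \<alpha> \<and> \<alpha> \<le> c \<and>
           (\<forall>i\<in>{1..n}. is_piece c (R i)) \<and>
           gpav_outcome n c \<alpha> R A \<and> \<not> cake_EJR n \<alpha> R A"
proof (rule exI[of _ 3], rule exI[of _ 2], rule exI[of _ "1/4"], rule exI[of _ example_profile],
    rule exI[of _ example_outcome], intro conjI)
  show "(3::nat) \<ge> 1" "(2::real) > 0" "(0::real) < 1/4" "(1/4::real) \<le> 2" by simp_all
qed (fact example_profile_pieces example_outcome_gpav example_outcome_not_cake_EJR)+

end
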